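(* Let $\xi_0,\xi_1,\xi_2,\ldots$ be independent and identically distributed real random variables. Suppose $\xi_0$ has zero mean and finite positive variance, and that the moment generating function of $\xi_0$ exists (is finite) on an open interval around zero. For $n\ge 1$ let $\mathcal{T}^{sym}_n$ be the $n\times n$ random symmetric Toeplitz matrix whose $(i,j)$ entry is $\xi_{|i-j|}$ for $1\le i,j\le n$. Then there exist constants $C_0,C_1>0$ depending only on the distribution of $\xi_0$ such that \[ \mathbb{P}\left(\sigma_{\max}(\mathcal{T}^{sym}_n)\geq C_0\left((2n)\log(2n)\right)^{1/2}\right)\leq \frac{C_1}{(2n)^2}. \]
   Context: $\sigma_{\max}(A)$ denotes the largest singular value of a matrix $A$ (its operator norm). *)

theory Defs
  imports "HOL-Probability.Probability"
begin

text \<open>The n x n symmetric Toeplitz matrix with entries a_{|i-j|}, rows and columns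
  indexed by 0..n-1 (equivalently 1..n).\<close>
definition sym_toeplitz :: "(nat \<Rightarrow> real) \<Rightarrow> nat \<Rightarrow> nat \<Rightarrow> real" where
  "sym_toeplitz a i j = a (if i \<le> j then j - i else i - j)"

text \<open>Largest singular value (= operator norm w.r.t. the Euclidean norm) of an n x n
  real matrix A, given entrywise for indices i, j < n.\<close>
definition sigma_max :: "nat \<Rightarrow> (nat \<Rightarrow> nat \<Rightarrow> real) \<Rightarrow> real" where
  "sigma_max n A = Sup {sqrt (\<Sum>i<n. (\<Sum>j<n. A i j * x j)^2) | x. (\<Sum>j<n. (x j)^2) \<le> 1}"

end

theory Submission
  imports Defs "HOL-Library.Real_Mod"
begin

text \<open>The symmetric Toeplitz matrix embeds into a \<open>2n \<times> 2n\<close> circulant matrix, so its quadratic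
  form is an average of the circulant eigenvalues \<open>\<lambda>\<^sub>m\<close> weighted by the nonnegative Fourier
  energies of the vector, and \<open>\<sigma>\<^sub>m\<^sub>a\<^sub>x \<le> max\<^sub>m \<bar>\<lambda>\<^sub>m\<bar>\<close>. Each \<open>\<lambda>\<^sub>m\<close> is a sum \<open>\<Sum>\<^sub>k v\<^sub>k \<xi>\<^sub>k\<close> of independent
  variables with \<open>\<bar>v\<^sub>k\<bar> \<le> 2\<close>. A finite moment generating function near 0 and mean zero give
  \<open>E exp (u \<xi>) \<le> exp (K u\<^sup>2)\<close> for small \<open>\<bar>u\<bar>\<close>, so a Chernoff bound yields
  \<open>P (\<bar>\<lambda>\<^sub>m\<bar> \<ge> C\<^sub>0 \<surd>(N log N)) \<le> 2 / N\<^sup>3\<close> for \<open>N = 2n\<close>, and a union bound over the \<open>2n\<close> eigenvalues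
  gives \<open>2 / N\<^sup>2\<close>.\<close>

lemma sum_cos_roots_of_unity:
  fixes e :: int
  assumes n: "n > 0" and e: "\<bar>e\<bar> < 2 * int n"
  shows "(\<Sum>m<2*n. cos (pi * real m * of_int e / real n)) = (if e = 0 then real (2*n) else 0)"
proof (cases "e = 0")
  case False
  define z where "z = cis (pi * of_int e / real n)"
  have z_power: "z ^ m = cis (pi * real m * of_int e / real n)" for m
    by (simp add: z_def Complex.DeMoivre mult_ac)
  have "z \<noteq> 1"
  proof
    assume "z = 1"
    then obtain k :: int where "pi * of_int e / real n = of_int k * (2 * pi)"
      unfolding z_def cis_eq_1_iff by blast
    then have "of_int e = (of_int (2 * k * int n) :: real)" using n by (simp add: field_simps)
    then have "e = 2 * k * int n" by (simp only: of_int_eq_iff)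
    with e False show False by (simp add: abs_mult)
  qed
  moreover have "z ^ (2*n) = cis (2 * pi * of_int e)"
    using n by (simp add: z_power field_simps)
  ultimately have "Re (\<Sum>m<2*n. z ^ m) = 0" by (simp add: sum_gp_strict)
  then show ?thesis using False by (simp add: z_power Re_sum)
qed simp

text \<open>\<open>sym_toeplitz a\<close> is the top-left \<open>n \<times> n\<close> block of the \<open>2n \<times> 2n\<close> circulant matrix with
  first row \<open>(a 0, a 1, \<dots>, a (n - 1), 0, a (n - 1), \<dots>, a 1)\<close>, whose eigenvalues are
  \<open>circ_eigenvalue n a m\<close> for \<open>m < 2n\<close>.\<close>

definition circ_weight :: "nat \<Rightarrow> nat \<Rightarrow> nat \<Rightarrow> real" where
  "circ_weight n m k = (if k = 0 then 1 else 2 * cos (pi * real m * real k / real n))"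

definition circ_eigenvalue :: "nat \<Rightarrow> (nat \<Rightarrow> real) \<Rightarrow> nat \<Rightarrow> real" where
  "circ_eigenvalue n a m = (\<Sum>k<n. circ_weight n m k * a k)"

lemma abs_circ_weight_le: "\<bar>circ_weight n m k\<bar> \<le> 2"
  by (simp add: circ_weight_def abs_mult)

lemma sum_circ_weight_mult_cos:
  fixes d :: int
  assumes n: "n > 0" and k: "k < n" and d: "\<bar>d\<bar> < int n"
  shows "(\<Sum>m<2*n. circ_weight n m k * cos (pi * real m * of_int d / real n))
         = (if int k = \<bar>d\<bar> then real (2*n) else 0)"
proof (cases "k = 0")
  case True
  then show ?thesis
    using sum_cos_roots_of_unity[OF n, of d] d by (simp add: circ_weight_def)
next
  case False
  have split: "circ_weight n m k * cos (pi * real m * of_int d / real n)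
     = cos (pi * real m * of_int (int k - d) / real n) + cos (pi * real m * of_int (int k + d) / real n)"
    for m
    using False
    by (simp add: circ_weight_def ring_distribs diff_divide_distrib add_divide_distrib cos_diff cos_add)
  have "\<bar>int k - d\<bar> < 2 * int n" and "\<bar>int k + d\<bar> < 2 * int n" using k d by linarith+
  then show ?thesis
    using False unfolding split sum.distrib by (simp only: sum_cos_roots_of_unity[OF n]) auto
qed

lemma sym_toeplitz_eq_sum_circ_eigenvalue:
  assumes n: "n > 0" and i: "i < n" and j: "j < n"
  shows "sym_toeplitz a i j
    = (\<Sum>m<2*n. circ_eigenvalue n a m * cos (pi * real m / real n * (real i - real j))) / real (2*n)"
proof -
  define d where "d = int i - int j"
  have d: "\<bar>d\<bar> < int n" "nat \<bar>d\<bar> < n" using i j by (auto simp: d_def)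
  have "(\<Sum>m<2*n. circ_eigenvalue n a m * cos (pi * real m / real n * (real i - real j)))
      = (\<Sum>k<n. a k * (\<Sum>m<2*n. circ_weight n m k * cos (pi * real m * of_int d / real n)))"
    unfolding circ_eigenvalue_def d_def sum_distrib_left sum_distrib_right
    by (subst sum.swap) (simp add: mult_ac)
  also have "\<dots> = (\<Sum>k<n. if k = nat \<bar>d\<bar> then a k * real (2*n) else 0)"
    by (intro sum.cong refl) (auto simp: sum_circ_weight_mult_cos[OF n _ d(1)])
  also have "\<dots> = a (nat \<bar>d\<bar>) * real (2*n)"
    using d(2) by simp
  finally show ?thesis
    using n by (simp add: sym_toeplitz_def d_def nat_diff_distrib)
qed

lemma sum_sum_mult_cos_diff:
  "(\<Sum>i<n. \<Sum>j<n. x i * x j * cos (t * (real i - real j)))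
   = (\<Sum>i<n. x i * cos (t * real i))\<^sup>2 + (\<Sum>i<n. x i * sin (t * real i))\<^sup>2"
  unfolding power2_eq_square sum_product
  by (simp add: right_diff_distrib cos_diff sum.distrib[symmetric] algebra_simps)

definition fourier_energy :: "nat \<Rightarrow> (nat \<Rightarrow> real) \<Rightarrow> nat \<Rightarrow> real" where
  "fourier_energy n x m = (\<Sum>i<n. x i * cos (pi * real m / real n * real i))\<^sup>2
                        + (\<Sum>i<n. x i * sin (pi * real m / real n * real i))\<^sup>2"

lemma fourier_energy_nonneg: "fourier_energy n x m \<ge> 0"
  by (simp add: fourier_energy_def)

lemma sum_fourier_energy:
  assumes n: "n > 0"
  shows "(\<Sum>m<2*n. fourier_energy n x m) = real (2*n) * (\<Sum>i<n. (x i)\<^sup>2)"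
proof -
  have "(\<Sum>m<2*n. fourier_energy n x m)
      = (\<Sum>i<n. \<Sum>j<n. x i * x j *
           (\<Sum>m<2*n. cos (pi * real m * of_int (int i - int j) / real n)))"
    unfolding fourier_energy_def sum_sum_mult_cos_diff[symmetric] sum_distrib_left
    by (subst sum.swap, subst (2) sum.swap) (simp add: mult_ac)
  also have "\<dots> = (\<Sum>i<n. \<Sum>j<n. if j = i then real (2*n) * (x i)\<^sup>2 else 0)"
  proof (intro sum.cong refl)
    fix i j assume "i \<in> {..<n}" "j \<in> {..<n}"
    then have "\<bar>int i - int j\<bar> < 2 * int n" by auto
    from sum_cos_roots_of_unity[OF n this] show "x i * x j *
        (\<Sum>m<2*n. cos (pi * real m * of_int (int i - int j) / real n))
      = (if j = i then real (2*n) * (x i)\<^sup>2 else 0)"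
      by (simp add: power2_eq_square)
  qed
  also have "\<dots> = real (2*n) * (\<Sum>i<n. (x i)\<^sup>2)"
    by (simp add: sum_distrib_left)
  finally show ?thesis .
qed

lemma sym_toeplitz_quadratic_form:
  assumes n: "n > 0"
  shows "(\<Sum>i<n. \<Sum>j<n. x i * x j * sym_toeplitz a i j)
    = (\<Sum>m<2*n. circ_eigenvalue n a m * fourier_energy n x m) / real (2*n)"
proof -
  have "(\<Sum>i<n. \<Sum>j<n. x i * x j * sym_toeplitz a i j)
    = (\<Sum>i<n. \<Sum>j<n. \<Sum>m<2*n. circ_eigenvalue n a m *
         (x i * x j * cos (pi * real m / real n * (real i - real j)))) / real (2*n)"
    by (simp add: sym_toeplitz_eq_sum_circ_eigenvalue[OF n] sum_distrib_left sum_divide_distrib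
        mult_ac)
  also have "\<dots> = (\<Sum>m<2*n. circ_eigenvalue n a m * fourier_energy n x m) / real (2*n)"
    unfolding fourier_energy_def sum_sum_mult_cos_diff[symmetric] sum_distrib_left
    by (subst (2) sum.swap, subst sum.swap) (rule refl)
  finally show ?thesis .
qed

lemma sym_toeplitz_quadratic_form_bound:
  assumes n: "n > 0" and L: "\<And>m. m < 2*n \<Longrightarrow> \<bar>circ_eigenvalue n a m\<bar> \<le> L"
  shows "\<bar>\<Sum>i<n. \<Sum>j<n. x i * x j * sym_toeplitz a i j\<bar> \<le> L * (\<Sum>i<n. (x i)\<^sup>2)"
proof -
  have "\<bar>\<Sum>m<2*n. circ_eigenvalue n a m * fourier_energy n x m\<bar>
      \<le> (\<Sum>m<2*n. L * fourier_energy n x m)"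
    by (rule order_trans[OF sum_abs sum_mono])
      (auto simp: abs_mult fourier_energy_nonneg intro!: mult_right_mono L)
  also have "\<dots> = L * (\<Sum>i<n. (x i)\<^sup>2) * real (2*n)"
    by (simp add: sum_distrib_left[symmetric] sum_fourier_energy[OF n])
  finally show ?thesis
    using n by (simp add: sym_toeplitz_quadratic_form[OF n] divide_le_eq)
qed

lemma quadratic_form_polarization:
  fixes T :: "nat \<Rightarrow> nat \<Rightarrow> real"
  assumes sym: "\<And>i j. T i j = T j i"
  shows "(\<Sum>i<n. \<Sum>j<n. (x i + y i) * (x j + y j) * T i j)
       - (\<Sum>i<n. \<Sum>j<n. (x i - y i) * (x j - y j) * T i j)
       = 4 * (\<Sum>i<n. y i * (\<Sum>j<n. T i j * x j))"
proof -
  have "(\<Sum>i<n. \<Sum>j<n. x i * y j * T i j) = (\<Sum>j<n. \<Sum>i<n. y j * (T j i * x i))"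
    by (subst sum.swap) (simp add: sym mult_ac)
  then have "(\<Sum>i<n. \<Sum>j<n. x i * y j * T i j) = (\<Sum>i<n. y i * (\<Sum>j<n. T i j * x j))"
    by (simp add: sum_distrib_left)
  moreover have "(\<Sum>i<n. \<Sum>j<n. y i * x j * T i j) = (\<Sum>i<n. y i * (\<Sum>j<n. T i j * x j))"
    by (simp add: sum_distrib_left mult_ac)
  moreover have "(\<Sum>i<n. \<Sum>j<n. (x i + y i) * (x j + y j) * T i j)
       - (\<Sum>i<n. \<Sum>j<n. (x i - y i) * (x j - y j) * T i j)
       = 2 * (\<Sum>i<n. \<Sum>j<n. x i * y j * T i j) + 2 * (\<Sum>i<n. \<Sum>j<n. y i * x j * T i j)"
    unfolding sum_subtractf[symmetric] sum_distrib_left sum.distrib[symmetric]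
    by (intro sum.cong refl) (simp add: algebra_simps)
  ultimately show ?thesis by simp
qed

lemma matrix_norm_le_if_quadratic_form_le:
  fixes T :: "nat \<Rightarrow> nat \<Rightarrow> real"
  assumes sym: "\<And>i j. T i j = T j i" and L: "L > 0"
    and q: "\<And>u. \<bar>\<Sum>i<n. \<Sum>j<n. u i * u j * T i j\<bar> \<le> L * (\<Sum>i<n. (u i)\<^sup>2)"
    and x: "(\<Sum>j<n. (x j)\<^sup>2) \<le> 1"
  shows "(\<Sum>i<n. (\<Sum>j<n. T i j * x j)\<^sup>2) \<le> L\<^sup>2"
proof -
  define Tx where "Tx i = (\<Sum>j<n. T i j * x j)" for i
  define s where "s = (\<Sum>i<n. (Tx i)\<^sup>2)"
  define y where "y i = Tx i / L" for i
  have "4 * s / L = 4 * (\<Sum>i<n. y i * Tx i)"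
    by (simp add: s_def y_def power2_eq_square sum_divide_distrib[symmetric])
  also have "\<dots> \<le> L * (\<Sum>i<n. (x i + y i)\<^sup>2) + L * (\<Sum>i<n. (x i - y i)\<^sup>2)"
    using quadratic_form_polarization[where T=T and n=n and x=x and y=y, OF sym]
      q[of "\<lambda>i. x i + y i"] q[of "\<lambda>i. x i - y i"]
    unfolding Tx_def by linarith
  also have "\<dots> = L * (2 * (\<Sum>i<n. (x i)\<^sup>2) + 2 * (\<Sum>i<n. (y i)\<^sup>2))"
    by (simp add: power2_eq_square algebra_simps sum.distrib[symmetric] sum_distrib_left)
  also have "\<dots> \<le> L * (2 + 2 * s / L\<^sup>2)"
  proof -
    have "(\<Sum>i<n. (y i)\<^sup>2) = s / L\<^sup>2"
      by (simp add: s_def y_def power_divide sum_divide_distrib)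
    then show ?thesis using x L by simp
  qed
  also have "\<dots> = 2 * L + 2 * s / L"
    using L by (simp add: power2_eq_square field_simps)
  finally have "2 * s / L \<le> 2 * L" by simp
  then show ?thesis
    using L by (simp add: s_def Tx_def power2_eq_square divide_le_eq)
qed

lemma sigma_max_le_if_quadratic_form_le:
  fixes T :: "nat \<Rightarrow> nat \<Rightarrow> real"
  assumes sym: "\<And>i j. T i j = T j i" and L: "L > 0"
    and q: "\<And>u. \<bar>\<Sum>i<n. \<Sum>j<n. u i * u j * T i j\<bar> \<le> L * (\<Sum>i<n. (u i)\<^sup>2)"
  shows "sigma_max n T \<le> L"
  unfolding sigma_max_def
proof (rule cSup_least)
  show "{sqrt (\<Sum>i<n. (\<Sum>j<n. T i j * x j)\<^sup>2) | x. (\<Sum>j<n. (x j)\<^sup>2) \<le> 1} \<noteq> {}"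
    by (auto intro: exI[of _ "\<lambda>_. 0"])
next
  fix z assume "z \<in> {sqrt (\<Sum>i<n. (\<Sum>j<n. T i j * x j)\<^sup>2) | x. (\<Sum>j<n. (x j)\<^sup>2) \<le> 1}"
  then obtain x where z: "z = sqrt (\<Sum>i<n. (\<Sum>j<n. T i j * x j)\<^sup>2)"
    and x: "(\<Sum>j<n. (x j)\<^sup>2) \<le> 1" by blast
  have "z \<le> sqrt (L\<^sup>2)"
    unfolding z by (rule real_sqrt_le_mono[OF matrix_norm_le_if_quadratic_form_le[OF sym L q x]])
  then show "z \<le> L" using L by simp
qed

lemma sigma_max_sym_toeplitz_le_circ_eigenvalue:
  assumes n: "n > 0"
  obtains m where "m < 2*n" and "sigma_max n (sym_toeplitz a) \<le> \<bar>circ_eigenvalue n a m\<bar>"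
proof -
  define L where "L = Max ((\<lambda>m. \<bar>circ_eigenvalue n a m\<bar>) ` {..<2*n})"
  have ne: "{..<2*n} \<noteq> {}" using n by (simp add: lessThan_empty_iff)
  have "L \<in> (\<lambda>m. \<bar>circ_eigenvalue n a m\<bar>) ` {..<2*n}"
    unfolding L_def by (rule Max_in) (use ne in auto)
  then obtain m where m: "m < 2*n" "L = \<bar>circ_eigenvalue n a m\<bar>" by auto
  have L_ge: "\<bar>circ_eigenvalue n a m'\<bar> \<le> L" if "m' < 2*n" for m'
    unfolding L_def by (rule Max_ge) (use that in auto)
  have sym: "sym_toeplitz a i j = sym_toeplitz a j i" for i j
    by (simp add: sym_toeplitz_def)
  show ?thesis
  proof (cases "L = 0")
    case True
    have le_eps: "sigma_max n (sym_toeplitz a) \<le> \<epsilon>" if "\<epsilon> > 0" for \<epsilon>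
      by (rule sigma_max_le_if_quadratic_form_le[OF sym that sym_toeplitz_quadratic_form_bound[OF n]])
        (use L_ge True that in force)
    have "sigma_max n (sym_toeplitz a) \<le> 0" by (rule field_le_epsilon) (simp add: le_eps)
    then show ?thesis using that m True by simp
  next
    case False
    then have "L > 0" using L_ge[of 0] n by linarith
    from sigma_max_le_if_quadratic_form_le[OF sym this sym_toeplitz_quadratic_form_bound[OF n L_ge]]
    show ?thesis using that m by simp
  qed
qed

lemma exp_mult_le_convex:
  fixes l r :: real
  assumes "0 \<le> l" "l \<le> 1"
  shows "exp (l * r) \<le> 1 - l + l * exp r"
  using convex_onD[OF exp_convex, of l 0 r] assms by simp

lemma exp_remainder_scale_le:
  fixes l r :: real
  assumes l: "0 \<le> l" "l \<le> 1" and r: "0 \<le> r"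
  shows "exp (l * r) - 1 - l * r \<le> l\<^sup>2 * (exp r - 1 - r)"
proof -
  define g where "g x = l\<^sup>2 * (exp x - 1 - x) - (exp (l * x) - 1 - l * x)" for x
  have "g 0 \<le> g r"
  proof (rule DERIV_nonneg_imp_nondecreasing[OF r])
    fix x :: real
    have "DERIV g x :> l * (l * (exp x - 1)) - l * (exp (l * x) - 1)"
      unfolding g_def by (auto intro!: derivative_eq_intros simp: power2_eq_square algebra_simps)
    moreover have "l * (exp (l * x) - 1) \<le> l * (l * (exp x - 1))"
      using exp_mult_le_convex[OF l, of x] l by (intro mult_left_mono) (auto simp: algebra_simps)
    ultimately show "\<exists>y. DERIV g x :> y \<and> y \<ge> 0" by (intro exI conjI) auto
  qed
  then show ?thesis by (simp add: g_def)
qed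

lemma exp_remainder_le_abs:
  fixes y :: real
  shows "exp y - 1 - y \<le> exp \<bar>y\<bar> - 1 - \<bar>y\<bar>"
proof (cases "y \<ge> 0")
  case False
  then have "- y \<le> (exp (- y) - inverse (exp (- y))) / 2" by (intro real_le_x_sinh) simp
  then show ?thesis using False by (simp add: exp_minus)
qed simp

lemma exp_le_quadratic_majorant:
  fixes u z a :: real
  assumes a: "a > 0" and u: "\<bar>u\<bar> \<le> a"
  shows "exp (u * z) \<le> 1 + u * z + (u / a)\<^sup>2 * (exp (a * z) + exp (- (a * z)))"
proof -
  define l where "l = \<bar>u\<bar> / a"
  define r where "r = a * \<bar>z\<bar>"
  have l: "0 \<le> l" "l \<le> 1" and r: "0 \<le> r" using a u by (auto simp: l_def r_def)
  have "\<bar>u * z\<bar> = l * r" using a by (simp add: l_def r_def abs_mult)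
  then have "exp (u * z) - 1 - u * z \<le> l\<^sup>2 * (exp r - 1 - r)"
    using exp_remainder_le_abs[of "u * z"] exp_remainder_scale_le[OF l r] by simp
  also have "\<dots> \<le> l\<^sup>2 * (exp (a * z) + exp (- (a * z)))"
  proof (intro mult_left_mono)
    have "exp r \<le> exp (a * z) + exp (- (a * z))"
      using exp_gt_zero[of "a * z"] exp_gt_zero[of "- (a * z)"] by (cases "z \<ge> 0") (simp_all add: r_def)
    then show "exp r - 1 - r \<le> exp (a * z) + exp (- (a * z))" using r by simp
  qed simp
  also have "l\<^sup>2 = (u / a)\<^sup>2" by (simp add: l_def power2_eq_square)
  finally show ?thesis by simp
qed

context prob_space
begin

lemma expectation_exp_le_exp_square:
  fixes X :: "'a \<Rightarrow> real"
  assumes X: "integrable M X" and mean: "expectation X = 0" and a: "a > 0"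
    and int_exp: "\<And>u. \<bar>u\<bar> \<le> a \<Longrightarrow> integrable M (\<lambda>\<omega>. exp (u * X \<omega>))"
    and u: "\<bar>u\<bar> \<le> a"
  shows "expectation (\<lambda>\<omega>. exp (u * X \<omega>))
     \<le> exp ((expectation (\<lambda>\<omega>. exp (a * X \<omega>)) + expectation (\<lambda>\<omega>. exp (- a * X \<omega>))) / a\<^sup>2 * u\<^sup>2)"
    (is "_ \<le> exp (?K * u\<^sup>2)")
proof -
  have int_pm: "integrable M (\<lambda>\<omega>. exp (a * X \<omega>))" "integrable M (\<lambda>\<omega>. exp (- a * X \<omega>))"
    using int_exp[of a] int_exp[of "- a"] a by simp_all
  have "expectation (\<lambda>\<omega>. exp (u * X \<omega>))
      \<le> expectation (\<lambda>\<omega>. 1 + u * X \<omega> + (u / a)\<^sup>2 * (exp (a * X \<omega>) + exp (- a * X \<omega>)))"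
    using exp_le_quadratic_majorant[OF a u] X int_pm
    by (intro integral_mono int_exp[OF u]) auto
  also have "\<dots> = 1 + ?K * u\<^sup>2"
    using X int_pm mean a by (simp add: prob_space power_divide)
  also have "\<dots> \<le> exp (?K * u\<^sup>2)" by (rule exp_ge_add_one_self)
  finally show ?thesis .
qed

lemma integrable_expectation_comp_eq_if_distr_eq:
  fixes X Y :: "'a \<Rightarrow> real" and f :: "real \<Rightarrow> real"
  assumes "X \<in> borel_measurable M" "Y \<in> borel_measurable M"
    and "distr M borel X = distr M borel Y" and f: "f \<in> borel_measurable borel"
  shows "integrable M (\<lambda>\<omega>. f (X \<omega>)) = integrable M (\<lambda>\<omega>. f (Y \<omega>))"
    and "expectation (\<lambda>\<omega>. f (X \<omega>)) = expectation (\<lambda>\<omega>. f (Y \<omega>))"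
proof -
  have "integrable M (\<lambda>\<omega>. f (X \<omega>)) = integrable (distr M borel X) f"
    by (rule integrable_distr_eq[where g=X and N=borel and f=f, symmetric]) (use assms in auto)
  also have "\<dots> = integrable M (\<lambda>\<omega>. f (Y \<omega>))"
    unfolding assms(3) by (rule integrable_distr_eq[where g=Y and N=borel and f=f]) (use assms in auto)
  finally show "integrable M (\<lambda>\<omega>. f (X \<omega>)) = integrable M (\<lambda>\<omega>. f (Y \<omega>))" .
  have "expectation (\<lambda>\<omega>. f (X \<omega>)) = integral\<^sup>L (distr M borel X) f"
    by (rule integral_distr[where g=X and N=borel and f=f, symmetric]) (use assms in auto)
  also have "\<dots> = expectation (\<lambda>\<omega>. f (Y \<omega>))"
    unfolding assms(3) by (rule integral_distr[where g=Y and N=borel and f=f]) (use assms in auto)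
  finally show "expectation (\<lambda>\<omega>. f (X \<omega>)) = expectation (\<lambda>\<omega>. f (Y \<omega>))" .
qed

lemma iid_sub_gaussian_mgf:
  fixes \<xi> :: "nat \<Rightarrow> 'a \<Rightarrow> real"
  assumes rv: "\<And>k. \<xi> k \<in> borel_measurable M"
    and ident: "\<And>k. distr M borel (\<xi> k) = distr M borel (\<xi> 0)"
    and int: "integrable M (\<xi> 0)" and mean: "expectation (\<xi> 0) = 0"
    and mgf: "\<exists>\<delta>>0. \<forall>t\<in>{-\<delta><..<\<delta>}. integrable M (\<lambda>\<omega>. exp (t * \<xi> 0 \<omega>))"
  obtains a K where "a > 0" "K \<ge> 0"
    and "\<And>k u. \<bar>u\<bar> \<le> a \<Longrightarrow> integrable M (\<lambda>\<omega>. exp (u * \<xi> k \<omega>))"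
    and "\<And>k u. \<bar>u\<bar> \<le> a \<Longrightarrow> expectation (\<lambda>\<omega>. exp (u * \<xi> k \<omega>)) \<le> exp (K * u\<^sup>2)"
proof -
  obtain \<delta> where \<delta>: "\<delta> > 0" "\<forall>t\<in>{-\<delta><..<\<delta>}. integrable M (\<lambda>\<omega>. exp (t * \<xi> 0 \<omega>))"
    using mgf by blast
  define a where "a = \<delta> / 2"
  define K where "K = (expectation (\<lambda>\<omega>. exp (a * \<xi> 0 \<omega>))
                     + expectation (\<lambda>\<omega>. exp (- a * \<xi> 0 \<omega>))) / a\<^sup>2"
  have a: "a > 0" using \<delta> by (simp add: a_def)
  have int0: "integrable M (\<lambda>\<omega>. exp (u * \<xi> 0 \<omega>))" if "\<bar>u\<bar> \<le> a" for u
  proof -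
    have "u \<in> {-\<delta><..<\<delta>}" using that \<delta>(1) by (auto simp: a_def)
    then show ?thesis using \<delta>(2) by blast
  qed
  have exp_meas: "(\<lambda>x. exp (u * x)) \<in> borel_measurable borel" for u :: real by measurable
  have transfer: "integrable M (\<lambda>\<omega>. exp (u * \<xi> k \<omega>)) = integrable M (\<lambda>\<omega>. exp (u * \<xi> 0 \<omega>))"
    "expectation (\<lambda>\<omega>. exp (u * \<xi> k \<omega>)) = expectation (\<lambda>\<omega>. exp (u * \<xi> 0 \<omega>))" for k u
    using integrable_expectation_comp_eq_if_distr_eq[OF rv[of k] rv[of 0] ident[of k] exp_meas[of u]]
    by simp_all
  show ?thesis
  proof
    show "a > 0" by fact
    show "K \<ge> 0"
      unfolding K_def by (intro divide_nonneg_pos add_nonneg_nonneg integral_nonneg) (use a in auto)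
    show "integrable M (\<lambda>\<omega>. exp (u * \<xi> k \<omega>))" if "\<bar>u\<bar> \<le> a" for k u
      unfolding transfer(1)[of u k] by (rule int0[OF that])
    show "expectation (\<lambda>\<omega>. exp (u * \<xi> k \<omega>)) \<le> exp (K * u\<^sup>2)" if "\<bar>u\<bar> \<le> a" for k u
      using transfer(2)[of u k] expectation_exp_le_exp_square[OF int mean a int0 that] by (simp add: K_def)
  qed
qed

lemma prob_weighted_sum_ge_le:
  fixes \<xi> :: "nat \<Rightarrow> 'a \<Rightarrow> real" and v :: "nat \<Rightarrow> real"
  assumes indep: "indep_vars (\<lambda>_. borel) \<xi> UNIV"
    and int_exp: "\<And>k u. \<bar>u\<bar> \<le> a \<Longrightarrow> integrable M (\<lambda>\<omega>. exp (u * \<xi> k \<omega>))"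
    and mgf: "\<And>k u. \<bar>u\<bar> \<le> a \<Longrightarrow> expectation (\<lambda>\<omega>. exp (u * \<xi> k \<omega>)) \<le> exp (K * u\<^sup>2)"
    and K: "K \<ge> 0" and v: "\<And>k. \<bar>v k\<bar> \<le> B" and s: "s > 0" "B * s \<le> a"
  shows "prob {\<omega> \<in> space M. t \<le> (\<Sum>k<n. v k * \<xi> k \<omega>)} \<le> exp (- s * t + real n * K * (B * s)\<^sup>2)"
proof -
  define Y where "Y k = (\<lambda>\<omega>. exp (s * v k * \<xi> k \<omega>))" for k
  have sv: "\<bar>s * v k\<bar> \<le> a" for k
  proof -
    have "\<bar>s * v k\<bar> \<le> s * B" using v[of k] s by (simp add: abs_mult)
    then show ?thesis using s by (simp add: mult.commute[of s B])
  qed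
  have int_Y: "integrable M (Y k)" for k
    unfolding Y_def by (rule int_exp[OF sv])
  have indep_Y: "indep_vars (\<lambda>_. borel) Y {..<n}"
    using indep_vars_compose2[OF indep, of "\<lambda>k x. exp (s * v k * x)" "\<lambda>_. borel"]
    unfolding Y_def[abs_def] by (auto intro: indep_vars_subset)
  have exp_sum_eq_prod: "(\<lambda>\<omega>. exp (s * (\<Sum>k<n. v k * \<xi> k \<omega>))) = (\<lambda>\<omega>. \<Prod>k<n. Y k \<omega>)"
    by (simp add: Y_def sum_distrib_left exp_sum mult.assoc)
  have int_prod: "integrable M (\<lambda>\<omega>. exp (s * (\<Sum>k<n. v k * \<xi> k \<omega>)))"
    unfolding exp_sum_eq_prod by (rule indep_vars_integrable[OF _ indep_Y]) (auto simp: int_Y)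
  have "prob {\<omega> \<in> space M. t \<le> (\<Sum>k<n. v k * \<xi> k \<omega>)}
      \<le> exp (- s * t) * (\<integral>\<omega>\<in>space M. exp (s * (\<Sum>k<n. v k * \<xi> k \<omega>)) \<partial>M)"
    using integrable_mult_indicator[OF sets.top int_prod]
    by (intro Chernoff_ineq_ge s) (simp_all add: set_integrable_def)
  also have "\<dots> = exp (- s * t) * (\<Prod>k<n. expectation (Y k))"
    using int_prod
    by (simp add: set_integral_space exp_sum_eq_prod indep_vars_lebesgue_integral[OF _ indep_Y] int_Y)
  also have "\<dots> \<le> exp (- s * t) * (\<Prod>k<n. exp (K * (B * s)\<^sup>2))"
  proof (intro mult_left_mono prod_mono conjI)
    fix k
    have "(s * v k)\<^sup>2 \<le> (B * s)\<^sup>2"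
      using sv v[of k] s by (simp add: abs_le_square_iff[symmetric] abs_mult mult.commute)
    have "expectation (Y k) \<le> exp (K * (s * v k)\<^sup>2)"
      unfolding Y_def by (rule mgf[OF sv])
    also have "\<dots> \<le> exp (K * (B * s)\<^sup>2)"
      using K \<open>(s * v k)\<^sup>2 \<le> (B * s)\<^sup>2\<close> by (simp add: mult_left_mono)
    finally show "expectation (Y k) \<le> exp (K * (B * s)\<^sup>2)" .
  qed (simp_all add: Y_def)
  also have "\<dots> = exp (- s * t + real n * K * (B * s)\<^sup>2)"
    by (simp add: prod_constant exp_of_nat_mult[symmetric] mult.assoc mult_exp_exp)
  finally show ?thesis .
qed

text \<open>Chernoff bound with \<open>s = c \<surd>(log N / N)\<close>, \<open>N = 2n\<close>: the exponent becomes \<open>-3 log N\<close>.\<close>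

lemma prob_weighted_sum_ge_sqrt_log_le:
  fixes \<xi> :: "nat \<Rightarrow> 'a \<Rightarrow> real" and v :: "nat \<Rightarrow> real"
  assumes indep: "indep_vars (\<lambda>_. borel) \<xi> UNIV"
    and int_exp: "\<And>k u. \<bar>u\<bar> \<le> a \<Longrightarrow> integrable M (\<lambda>\<omega>. exp (u * \<xi> k \<omega>))"
    and mgf: "\<And>k u. \<bar>u\<bar> \<le> a \<Longrightarrow> expectation (\<lambda>\<omega>. exp (u * \<xi> k \<omega>)) \<le> exp (K * u\<^sup>2)"
    and K: "K \<ge> 0" and v: "\<And>k. \<bar>v k\<bar> \<le> 2" and c: "c > 0" "2 * c \<le> a" and n: "n \<ge> 1"
  shows "prob {\<omega> \<in> space M. (3 + 2 * K * c\<^sup>2) / c * sqrt (real (2*n) * ln (real (2*n)))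
                               \<le> (\<Sum>k<n. v k * \<xi> k \<omega>)}
         \<le> 1 / real (2*n) ^ 3"
proof -
  define N where "N = real (2*n)"
  define s where "s = c * sqrt (ln N / N)"
  have N: "N \<ge> 2" "ln N > 0" using n by (simp_all add: N_def)
  have "ln N \<le> N" using ln_le_minus_one[of N] N by simp
  then have "sqrt (ln N / N) \<le> 1" using N by simp
  then have "s \<le> c" using c by (simp add: s_def mult_left_le)
  then have s_le: "2 * s \<le> a" using c by linarith
  have s_pos: "s > 0" using c N by (simp add: s_def)
  define t where "t = (3 + 2 * K * c\<^sup>2) / c * sqrt (N * ln N)"
  have "prob {\<omega> \<in> space M. t \<le> (\<Sum>k<n. v k * \<xi> k \<omega>)} \<le> exp (- s * t + real n * K * (2 * s)\<^sup>2)"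
    by (rule prob_weighted_sum_ge_le[OF indep int_exp mgf K v s_pos s_le])
  also have "- s * t + real n * K * (2 * s)\<^sup>2 = - 3 * ln N"
  proof -
    have "sqrt (ln N / N) * sqrt (N * ln N) = ln N"
      using N by (simp flip: real_sqrt_mult)
    then show ?thesis
      using c N by (simp add: s_def t_def N_def power_mult_distrib field_simps)
  qed
  also have "exp (- 3 * ln N) = 1 / N ^ 3"
    using N exp_of_nat_mult[of 3 "ln N"] by (simp add: exp_minus inverse_eq_divide)
  finally show ?thesis by (simp add: t_def N_def)
qed

lemma prob_sigma_max_sym_toeplitz_ge_le:
  fixes \<xi> :: "nat \<Rightarrow> 'a \<Rightarrow> real"
  assumes rv: "\<And>k. \<xi> k \<in> borel_measurable M" and n: "n > 0"
    and tail: "\<And>v. (\<And>k. \<bar>v k\<bar> \<le> 2) \<Longrightarrow> prob {\<omega> \<in> space M. t \<le> (\<Sum>k<n. v k * \<xi> k \<omega>)} \<le> p"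
  shows "prob {\<omega> \<in> space M. t \<le> sigma_max n (sym_toeplitz (\<lambda>k. \<xi> k \<omega>))} \<le> 2 * real (2*n) * p"
proof -
  define E where "E m \<sigma> = {\<omega> \<in> space M. t \<le> (\<Sum>k<n. (\<sigma> * circ_weight n m k) * \<xi> k \<omega>)}"
    for m and \<sigma> :: real
  have E: "E m \<sigma> \<in> events" for m \<sigma> unfolding E_def using rv by measurable
  have "{\<omega> \<in> space M. t \<le> sigma_max n (sym_toeplitz (\<lambda>k. \<xi> k \<omega>))}
      \<subseteq> (\<Union>m<2*n. E m 1 \<union> E m (- 1))"
  proof
    fix \<omega> assume "\<omega> \<in> {\<omega> \<in> space M. t \<le> sigma_max n (sym_toeplitz (\<lambda>k. \<xi> k \<omega>))}"
    then have \<omega>: "\<omega> \<in> space M" "t \<le> sigma_max n (sym_toeplitz (\<lambda>k. \<xi> k \<omega>))" by auto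
    obtain m where m: "m < 2*n"
      and "sigma_max n (sym_toeplitz (\<lambda>k. \<xi> k \<omega>)) \<le> \<bar>circ_eigenvalue n (\<lambda>k. \<xi> k \<omega>) m\<bar>"
      using sigma_max_sym_toeplitz_le_circ_eigenvalue[OF n] by blast
    then have "t \<le> \<bar>circ_eigenvalue n (\<lambda>k. \<xi> k \<omega>) m\<bar>" using \<omega>(2) by linarith
    then have "\<omega> \<in> E m 1 \<union> E m (- 1)"
      using \<omega>(1) by (auto simp: E_def circ_eigenvalue_def abs_if sum_negf split: if_splits)
    with m show "\<omega> \<in> (\<Union>m<2*n. E m 1 \<union> E m (- 1))" by blast
  qed
  then have "prob {\<omega> \<in> space M. t \<le> sigma_max n (sym_toeplitz (\<lambda>k. \<xi> k \<omega>))}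
      \<le> prob (\<Union>m<2*n. E m 1 \<union> E m (- 1))"
    using E by (intro finite_measure_mono) auto
  also have "\<dots> \<le> (\<Sum>m<2*n. prob (E m 1) + prob (E m (- 1)))"
    using E by (intro order_trans[OF finite_measure_subadditive_finite] sum_mono measure_Un_le) auto
  also have "\<dots> \<le> (\<Sum>m<2*n. p + p)"
  proof (intro sum_mono add_mono)
    have "prob (E m \<sigma>) \<le> p" if "\<bar>\<sigma>\<bar> = 1" for m \<sigma>
      unfolding E_def by (rule tail) (simp add: abs_mult that abs_circ_weight_le)
    then show "prob (E m 1) \<le> p" "prob (E m (- 1)) \<le> p" for m by simp_all
  qed
  finally show ?thesis by simp
qed

end

theorem mainTheorem3:
  fixes M :: "'a measure" and \<xi> :: "nat \<Rightarrow> 'a \<Rightarrow> real"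
  assumes "prob_space M"
    and rv: "\<And>k. \<xi> k \<in> borel_measurable M"
    and indep: "prob_space.indep_vars M (\<lambda>_. borel) \<xi> UNIV"
    and ident: "\<And>k. distr M borel (\<xi> k) = distr M borel (\<xi> 0)"
    and int1: "integrable M (\<xi> 0)"
    and mean0: "prob_space.expectation M (\<xi> 0) = 0"
    and int2: "integrable M (\<lambda>\<omega>. (\<xi> 0 \<omega>)^2)"
    and varpos: "prob_space.variance M (\<xi> 0) > 0"
    and mgf: "\<exists>\<delta>>0. \<forall>t\<in>{-\<delta><..<\<delta>}. integrable M (\<lambda>\<omega>. exp (t * \<xi> 0 \<omega>))"
  shows "\<exists>C0>0. \<exists>C1>0. \<forall>n\<ge>1.
           prob_space.prob M {\<omega> \<in> space M.
              sigma_max n (sym_toeplitz (\<lambda>k. \<xi> k \<omega>))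
                \<ge> C0 * sqrt (real (2*n) * ln (real (2*n)))}
           \<le> C1 / (real (2*n))^2"
proof -
  interpret prob_space M by fact
  obtain a K where a: "a > 0" and K: "K \<ge> 0"
    and int_exp: "\<And>k u. \<bar>u\<bar> \<le> a \<Longrightarrow> integrable M (\<lambda>\<omega>. exp (u * \<xi> k \<omega>))"
    and mgf_le: "\<And>k u. \<bar>u\<bar> \<le> a \<Longrightarrow> expectation (\<lambda>\<omega>. exp (u * \<xi> k \<omega>)) \<le> exp (K * u\<^sup>2)"
    using iid_sub_gaussian_mgf[where \<xi>=\<xi>, OF rv ident int1 mean0 mgf] by blast
  define c where "c = a / 2"
  define C0 where "C0 = (3 + 2 * K * c\<^sup>2) / c"
  have c: "c > 0" "2 * c \<le> a" using a by (simp_all add: c_def)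
  have "C0 > 0" using c K by (simp add: C0_def add_pos_nonneg)
  moreover have "prob {\<omega> \<in> space M. sigma_max n (sym_toeplitz (\<lambda>k. \<xi> k \<omega>))
                    \<ge> C0 * sqrt (real (2*n) * ln (real (2*n)))} \<le> 2 / (real (2*n))\<^sup>2"
    if n: "n \<ge> 1" for n
  proof -
    have "prob {\<omega> \<in> space M. sigma_max n (sym_toeplitz (\<lambda>k. \<xi> k \<omega>))
             \<ge> C0 * sqrt (real (2*n) * ln (real (2*n)))} \<le> 2 * real (2*n) * (1 / real (2*n) ^ 3)"
      using n unfolding C0_def
      by (intro prob_sigma_max_sym_toeplitz_ge_le rv
          prob_weighted_sum_ge_sqrt_log_le[OF indep int_exp mgf_le K _ c]) auto
    also have "\<dots> = 2 / (real (2*n))\<^sup>2"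
      using n by (simp add: power2_eq_square power3_eq_cube)
    finally show ?thesis .
  qed
  ultimately show ?thesis by (intro exI[of _ C0] conjI exI[of _ "2::real"]) auto
qed

end
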